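(* Assume Assumptions 1 and 2 for some $\delta>0$. For any distinct $u_1,u_2\in L$, as $n_R\to\infty$, $$\Pr[(u_1,u_2)\in E\mid S_L,S_R]=p_{u_1u_2}-\frac{p_{u_1u_2}^2}{2}+\left(\frac{p_{u_1u_2}}{6}+\frac{M_{R4}}{2n_RM_{R2}^2}\right)p_{u_1u_2}^2\,(1+O(n_R^{-2\delta})),$$ where $p_{u_1u_2}=\frac{M_{R2}}{M_{R1}^2}\cdot\frac{w_{u_1}w_{u_2}}{n_R}$. In particular $p_{u_1u_2}=O(n_R^{-2\delta})=o(1)$, so the projected graph is sparse.
   Context: Model: left nodes $L$ ($|L|=n_L$), right nodes $R$ ($|R|=n_R$), weight sequences $S_L=(w_u)_{u\in L}$, $S_R=(w_v)_{v\in R}$ of positive reals; $M_{Lk}=\frac1{n_L}\sum_{u\in L}w_u^k$, $M_{Rk}=\frac1{n_R}\sum_{v\in R}w_v^k$. The random bipartite graph $G_b=(L\sqcup R,E_b)$ contains each edge $(u,v)$, $u\in L$, $v\in R$, independently with probability $\min\left(\frac{w_uw_v}{n_RM_{R1}},1\right)$. The projected graph is $G=(L,E)$ with $(u,u')\in E$ for distinct $u,u'\in L$ iff there is $z\in R$ with $(u,z),(u',z)\in E_b$ (a single edge regardless of how many such $z$). Assumption 1: $\frac{w_uw_v}{n_RM_{R1}}\le1$ for all $u\in L,v\in R$. Assumption 2 (parameter $\delta>0$), as $n_L,n_R\to\infty$: $\max(S_L\cup S_R)=O(n_R^{1/2-\delta})$, $\min S_L=\Omega(1)$, $M_{R2}=O(M_{R1}^2)$,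 $M_{R4}=O(n_R^{1-2\delta})$. *)

theory Defs
  imports "HOL-Probability.Probability" "HOL-Library.Landau_Symbols"
begin

text \<open>Left nodes are 0..<nL, right nodes are 0..<nR (two separate index sets);
  weights are given by functions wL, wR on these index sets.\<close>

definition moment :: "nat \<Rightarrow> (nat \<Rightarrow> real) \<Rightarrow> nat \<Rightarrow> real" where
  "moment n w k = (1 / real n) * (\<Sum>i<n. w i ^ k)"

definition edge_prob :: "nat \<Rightarrow> (nat \<Rightarrow> real) \<Rightarrow> real \<Rightarrow> real \<Rightarrow> real" where
  "edge_prob nR wR wu wv = min (wu * wv / (real nR * moment nR wR 1)) 1"

definition bip_graph_pmf ::
  "nat \<Rightarrow> nat \<Rightarrow> (nat \<Rightarrow> real) \<Rightarrow> (nat \<Rightarrow> real) \<Rightarrow> (nat \<times> nat \<Rightarrow> bool) pmf" where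
  "bip_graph_pmf nL nR wL wR =
     Pi_pmf ({..<nL} \<times> {..<nR}) False
       (\<lambda>(u, v). bernoulli_pmf (edge_prob nR wR (wL u) (wR v)))"

definition proj_edge :: "nat \<Rightarrow> nat \<Rightarrow> (nat \<times> nat \<Rightarrow> bool) \<Rightarrow> nat \<Rightarrow> nat \<Rightarrow> bool" where
  "proj_edge nL nR Eb u u' \<longleftrightarrow>
     u \<in> {..<nL} \<and> u' \<in> {..<nL} \<and> u \<noteq> u' \<and> (\<exists>z\<in>{..<nR}. Eb (u, z) \<and> Eb (u', z))"

definition proj_edge_prob ::
  "nat \<Rightarrow> nat \<Rightarrow> (nat \<Rightarrow> real) \<Rightarrow> (nat \<Rightarrow> real) \<Rightarrow> nat \<Rightarrow> nat \<Rightarrow> real" where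
  "proj_edge_prob nL nR wL wR u u' =
     measure_pmf.prob (bip_graph_pmf nL nR wL wR) {Eb. proj_edge nL nR Eb u u'}"

end

theory Submission
  imports Defs
begin

text \<open>Given the weights, each right node z is a common neighbour of u1 and u2 independently,
  with probability q z = w1 w2 (W z)^2 / (n M1)^2; hence the projected edge has probability
  1 - (\<Prod>z. 1 - q z). Here \<Sum>q = p and \<Sum>q^2 = p^2 M4 / (n M2^2). Sandwiching log (1 - q)
  between -q - q^2/2 - q^3 and -q - q^2/2 and expanding exp to third order gives
  p - p^2/2 + (p^3/6 + (\<Sum>q^2)/2) up to a relative error 6p in the bracket, since every q z \<le> p.
  Finally p \<le> (max weight)^2 M2 / (n M1^2) = O(n^(-2\<delta>)).\<close>

lemma one_minus_exp_minus_le: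
  fixes y :: real assumes "y \<ge> 0"
  shows "1 - exp (-y) \<le> y - y^2/2 + y^3/6"
proof (cases "y = 0")
  case False
  with assms have "-y < 0" by simp
  from Maclaurin_minus[OF this, of 3 "\<lambda>_. exp" exp]
  obtain t where t: "t < 0"
    "exp (-y) = (\<Sum>m<3. exp 0 / fact m * (-y) ^ m) + exp t / fact 3 * (-y) ^ 3"
    by (auto intro: DERIV_exp)
  have "exp t * y^3 \<le> y^3"
    using t(1) assms by (intro mult_left_le_one_le) auto
  moreover have "exp (-y) = 1 - y + y^2/2 - exp t * y^3 / 6"
    using t(2) by (simp add: eval_nat_numeral fact_numeral lessThan_Suc algebra_simps)
  ultimately show ?thesis by simp
qed simp

lemma one_minus_exp_minus_ge:
  fixes y :: real assumes "y \<ge> 0"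
  shows "y - y^2/2 + y^3/6 - y^4/24 \<le> 1 - exp (-y)"
proof (cases "y = 0")
  case False
  with assms have "-y < 0" by simp
  from Maclaurin_minus[OF this, of 4 "\<lambda>_. exp" exp]
  obtain t where t: "t < 0"
    "exp (-y) = (\<Sum>m<4. exp 0 / fact m * (-y) ^ m) + exp t / fact 4 * (-y) ^ 4"
    by (auto intro: DERIV_exp)
  have "exp t * y^4 \<le> y^4"
    using t(1) assms by (intro mult_left_le_one_le) auto
  moreover have "exp (-y) = 1 - y + y^2/2 - y^3/6 + exp t * y^4 / 24"
    using t(2) by (simp add: eval_nat_numeral fact_numeral lessThan_Suc algebra_simps)
  ultimately show ?thesis by simp
qed simp

lemma one_minus_le_exp:
  fixes q :: real assumes "0 \<le> q" "q \<le> 1"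
  shows "1 - q \<le> exp (-q - q^2/2)"
proof -
  define h where "h = (\<lambda>x::real. (1 - x) * exp (x + x^2/2))"
  have "h q \<le> h 0"
  proof (rule DERIV_nonpos_imp_nonincreasing[OF assms(1)])
    fix x
    have "DERIV h x :> - (x^2) * exp (x + x^2/2)"
      unfolding h_def
      by (auto intro!: derivative_eq_intros simp: algebra_simps power2_eq_square)
    then show "\<exists>y. DERIV h x :> y \<and> y \<le> 0" by fastforce
  qed
  then have "(1 - q) * exp (q + q^2/2) * exp (-q - q^2/2) \<le> exp (-q - q^2/2)"
    by (simp add: h_def mult_right_mono)
  then show ?thesis by (simp add: mult.assoc flip: exp_add)
qed

lemma exp_le_one_minus:
  fixes q :: real assumes "0 \<le> q" "q \<le> 1/2"
  shows "exp (-q - q^2/2 - q^3) \<le> 1 - q"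
proof -
  define h where "h = (\<lambda>x::real. (1 - x) * exp (x + x^2/2 + x^3))"
  have "h 0 \<le> h q"
  proof (rule DERIV_nonneg_imp_nondecreasing[OF assms(1)])
    fix x assume x: "0 \<le> x" "x \<le> q"
    have "DERIV h x :> x^2 * (2 - 3 * x) * exp (x + x^2/2 + x^3)"
      unfolding h_def
      by (auto intro!: derivative_eq_intros simp: algebra_simps power2_eq_square power3_eq_cube)
    moreover have "0 \<le> x^2 * (2 - 3 * x)" using x assms by simp
    ultimately show "\<exists>y. DERIV h x :> y \<and> y \<ge> 0" by fastforce
  qed
  then have "exp (-q - q^2/2 - q^3) \<le> (1 - q) * exp (q + q^2/2 + q^3) * exp (-q - q^2/2 - q^3)"
    by (simp add: h_def mult_right_mono)
  then show ?thesis by (simp add: mult.assoc flip: exp_add)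
qed

lemma cubic_taylor_increment_bounds:
  fixes x h :: real assumes "0 \<le> x" "0 \<le> h" "x + h \<le> 1"
  shows "h * (1 - x - h/2) \<le> ((x+h) - (x+h)^2/2 + (x+h)^3/6) - (x - x^2/2 + x^3/6)"
    and "((x+h) - (x+h)^2/2 + (x+h)^3/6) - (x - x^2/2 + x^3/6) \<le> h"
proof -
  have incr: "((x+h) - (x+h)^2/2 + (x+h)^3/6) - (x - x^2/2 + x^3/6)
      = h * (1 - x - h/2) + h * (x^2/2 + x*h/2 + h^2/6)"
    by (simp add: field_simps power2_eq_square power3_eq_cube)
  have "0 \<le> x^2/2 + x*h/2 + h^2/6" using assms by simp
  then show "h * (1 - x - h/2) \<le> ((x+h) - (x+h)^2/2 + (x+h)^3/6) - (x - x^2/2 + x^3/6)"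
    unfolding incr using assms by simp
  have "x^2/2 + x*h/2 + h^2/6 \<le> x + h/2"
  proof -
    have "x^2 \<le> x" "x*h \<le> x" "h^2 \<le> h"
      using assms by (auto simp: power2_eq_square intro: mult_left_le_one_le mult_right_le_one_le)
    with assms show ?thesis by linarith
  qed
  then have "h * (x^2/2 + x*h/2 + h^2/6) \<le> h * (x + h/2)"
    using assms by (intro mult_left_mono) auto
  then show "((x+h) - (x+h)^2/2 + (x+h)^3/6) - (x - x^2/2 + x^3/6) \<le> h"
    unfolding incr by (simp add: algebra_simps)
qed

lemma third_order_estimate:
  fixes s1 s2 s3 P :: real
  assumes s1: "0 \<le> s1" "s1 \<le> 1/2" and s2: "0 \<le> s2" "s2 \<le> s1^2"
    and s3: "0 \<le> s3" "s3 \<le> s1 * s2"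
    and lower: "1 - exp (-(s1 + s2/2)) \<le> P" and upper: "P \<le> 1 - exp (-(s1 + s2/2 + s3))"
  shows "\<bar>P - (s1 - s1^2/2 + s1^3/6 + s2/2)\<bar> \<le> 6 * s1 * (s1^3/6 + s2/2)"
proof -
  define T where "T = (\<lambda>x::real. x - x^2/2 + x^3/6)"
  define D where "D = s1^3/6 + s2/2"
  have "s1^2 \<le> s1/2" using s1 mult_left_mono[of s1 "1/2" s1] by (simp add: power2_eq_square)
  with s2 have s2_le: "s2 \<le> s1/2" by linarith
  have s3_le: "s3 \<le> s2/2" using s3 s2 s1 mult_right_mono[of s1 "1/2" s2] by linarith
  have s1s2: "s1 * s2 \<le> 2 * s1 * D"
    using s1 s2 mult_left_mono[of s2 "2 * D" s1] by (simp add: D_def algebra_simps)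
  have "P \<le> T (s1 + (s2/2 + s3))"
    using upper one_minus_exp_minus_le[of "s1 + (s2/2 + s3)"] s1 s2 s3 by (simp add: T_def add.assoc)
  also have "\<dots> \<le> T s1 + (s2/2 + s3)"
    using cubic_taylor_increment_bounds(2)[of s1 "s2/2 + s3"] s1 s2 s3 s2_le s3_le by (simp add: T_def)
  finally have upper_error: "P - (T s1 + s2/2) \<le> 2 * s1 * D" using s3 s1s2 by linarith
  have "T (s1 + s2/2) - (s1 + s2/2)^4/24 \<le> P"
    using lower one_minus_exp_minus_ge[of "s1 + s2/2"] s1 s2 by (simp add: T_def)
  moreover have "T s1 + s2/2 * (1 - s1 - s2/2/2) \<le> T (s1 + s2/2)"
    using cubic_taylor_increment_bounds(1)[of s1 "s2/2"] s1 s2 s2_le unfolding T_def by linarith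
  moreover have "s2/2 * (s1 + s2/2/2) \<le> s1 * s2"
  proof -
    have "s2 * s2 \<le> s1 * s2" "0 \<le> s1 * s2"
      using s1 s2 s2_le by (auto intro: mult_right_mono)
    then show ?thesis by (simp add: ring_distribs mult.commute)
  qed
  moreover have "(s1 + s2/2)^4 / 24 \<le> 4 * s1 * D"
  proof -
    have "(s1 + s2/2)^4 \<le> (2 * s1)^4" using s1 s2 s2_le by (intro power_mono) auto
    also have "\<dots> = 24 * (4 * s1 * (s1^3/6))" by (simp add: power4_eq_xxxx power3_eq_cube)
    also have "\<dots> \<le> 24 * (4 * s1 * D)"
      using s1 s2 by (intro mult_left_mono) (auto simp: D_def)
    finally show ?thesis by simp
  qed
  ultimately have "- (6 * s1 * D) \<le> P - (T s1 + s2/2)" using s1s2 by (simp add: algebra_simps)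
  with upper_error show ?thesis unfolding T_def D_def by (simp add: abs_le_iff algebra_simps)
qed

lemma one_minus_prod_one_minus_estimate:
  fixes q :: "'a \<Rightarrow> real"
  assumes Z: "finite Z" and q_nonneg: "\<And>z. z \<in> Z \<Longrightarrow> 0 \<le> q z"
    and small: "(\<Sum>z\<in>Z. q z) \<le> 1/2"
  defines "s1 \<equiv> \<Sum>z\<in>Z. q z" and "s2 \<equiv> \<Sum>z\<in>Z. (q z)^2"
  shows "\<bar>(1 - (\<Prod>z\<in>Z. 1 - q z)) - (s1 - s1^2/2 + s1^3/6 + s2/2)\<bar>
           \<le> 6 * s1 * (s1^3/6 + s2/2)"
proof -
  define s3 where "s3 = (\<Sum>z\<in>Z. (q z)^3)"
  have q_le: "q z \<le> s1" if "z \<in> Z" for z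
    unfolding s1_def using Z q_nonneg that by (intro member_le_sum) auto
  have s2_le: "s2 \<le> s1 * s1"
    unfolding s2_def power2_eq_square by (subst (2) s1_def, subst sum_distrib_left)
      (use q_nonneg q_le in \<open>auto intro!: sum_mono mult_right_mono\<close>)
  have s3_le: "s3 \<le> s1 * s2"
    unfolding s3_def s2_def sum_distrib_left
  proof (intro sum_mono)
    fix z assume "z \<in> Z"
    then show "q z ^ 3 \<le> s1 * q z ^ 2"
      using mult_right_mono[OF q_le, of z "q z ^ 2"] by (simp add: power2_eq_square power3_eq_cube)
  qed
  have "(\<Prod>z\<in>Z. 1 - q z) \<le> (\<Prod>z\<in>Z. exp (- q z - (q z)^2/2))"
    using q_nonneg q_le small s1_def by (intro prod_mono conjI one_minus_le_exp) force+
  also have "\<dots> = exp (\<Sum>z\<in>Z. - q z - (q z)^2/2)" by (simp add: Z exp_sum)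
  also have "(\<Sum>z\<in>Z. - q z - (q z)^2/2) = -(s1 + s2/2)"
    by (simp add: s1_def s2_def sum_subtractf sum_negf sum_divide_distrib)
  finally have upper: "(\<Prod>z\<in>Z. 1 - q z) \<le> exp (-(s1 + s2/2))" .
  have "-(s1 + s2/2 + s3) = (\<Sum>z\<in>Z. - q z - (q z)^2/2 - (q z)^3)"
    by (simp add: s1_def s2_def s3_def sum_subtractf sum_negf sum_divide_distrib)
  then have "exp (-(s1 + s2/2 + s3)) = (\<Prod>z\<in>Z. exp (- q z - (q z)^2/2 - (q z)^3))"
    by (simp add: Z exp_sum)
  also have "\<dots> \<le> (\<Prod>z\<in>Z. 1 - q z)"
    using q_nonneg q_le small s1_def by (intro prod_mono conjI exp_le_one_minus) force+
  finally have lower: "exp (-(s1 + s2/2 + s3)) \<le> (\<Prod>z\<in>Z. 1 - q z)" .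
  have "0 \<le> s1" "0 \<le> s2" "0 \<le> s3"
    using q_nonneg by (auto simp: s1_def s2_def s3_def intro: sum_nonneg)
  with s2_le s3_le upper lower small show ?thesis
    by (intro third_order_estimate) (auto simp: power2_eq_square s1_def)
qed

lemma measure_pair_pmf_Times:
  "measure_pmf.prob (pair_pmf M N) (A \<times> B) = measure_pmf.prob M A * measure_pmf.prob N B"
proof -
  have "(A \<times> B) \<inter> set_pmf (pair_pmf M N) = (A \<inter> set_pmf M) \<times> (B \<inter> set_pmf N)"
    by auto
  then have "measure_pmf.prob (pair_pmf M N) (A \<times> B)
      = measure_pmf.prob (pair_pmf M N) ((A \<inter> set_pmf M) \<times> (B \<inter> set_pmf N))"
    by (metis measure_Int_set_pmf)
  also have "\<dots> = measure_pmf.prob M (A \<inter> set_pmf M) * measure_pmf.prob N (B \<inter> set_pmf N)"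
    by (rule measure_pmf_prob_product) auto
  finally show ?thesis by (simp add: measure_Int_set_pmf)
qed

lemma measure_Pi_pmf_no_common_True:
  fixes p :: "'a \<times> 'b \<Rightarrow> bool pmf"
  assumes "finite Z" "a \<noteq> b"
  shows "measure_pmf.prob (Pi_pmf ({a, b} \<times> Z) False p) {f. \<forall>z\<in>Z. \<not> (f (a, z) \<and> f (b, z))}
         = (\<Prod>z\<in>Z. 1 - pmf (p (a, z)) True * pmf (p (b, z)) True)"
  using assms(1)
proof (induction rule: finite_induct)
  case (insert z Z)
  let ?Q = "Pi_pmf ({a, b} \<times> Z) False p"
  let ?E = "{f. \<forall>z\<in>Z. \<not> (f (a, z) \<and> f (b, z))}"
  let ?pair = "pair_pmf (p (a, z)) (pair_pmf (p (b, z)) ?Q)"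
  let ?upd = "\<lambda>(x, y, f). f((b, z) := y, (a, z) := x)"
  have "{a, b} \<times> insert z Z = insert (a, z) (insert (b, z) ({a, b} \<times> Z))" by auto
  then have distr: "Pi_pmf ({a, b} \<times> insert z Z) False p = map_pmf ?upd ?pair"
    using insert assms(2)
    by (simp add: Pi_pmf_insert pair_map_pmf2 map_pmf_comp split_beta')
  have preimage: "?upd -` {f. \<forall>z'\<in>insert z Z. \<not> (f (a, z') \<and> f (b, z'))}
      = {False} \<times> (UNIV \<times> ?E) \<union> {True} \<times> ({False} \<times> ?E)"
    using insert assms(2) by (fastforce split: if_splits)
  have "measure_pmf.prob (Pi_pmf ({a, b} \<times> insert z Z) False p)
      {f. \<forall>z'\<in>insert z Z. \<not> (f (a, z') \<and> f (b, z'))}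
    = measure_pmf.prob ?pair ({False} \<times> (UNIV \<times> ?E) \<union> {True} \<times> ({False} \<times> ?E))"
    by (simp only: distr measure_map_pmf preimage)
  also have "\<dots> = measure_pmf.prob ?pair ({False} \<times> (UNIV \<times> ?E))
      + measure_pmf.prob ?pair ({True} \<times> ({False} \<times> ?E))"
    by (rule measure_pmf.finite_measure_Union) auto
  also have "\<dots> = (1 - pmf (p (a, z)) True * pmf (p (b, z)) True) * measure_pmf.prob ?Q ?E"
    by (simp add: measure_pair_pmf_Times measure_pmf_single pmf_False_conv_True algebra_simps)
  finally show ?case using insert by simp
qed simp

lemma proj_edge_prob_eq_prod:
  assumes u: "u1 < nL" "u2 < nL" "u1 \<noteq> u2"
  shows "proj_edge_prob nL nR wL wR u1 u2 =
    1 - (\<Prod>z<nR. 1 - pmf (bernoulli_pmf (edge_prob nR wR (wL u1) (wR z))) True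
                   * pmf (bernoulli_pmf (edge_prob nR wR (wL u2) (wR z))) True)"
proof -
  define P where "P = (\<lambda>(u, v). bernoulli_pmf (edge_prob nR wR (wL u) (wR v)))"
  define S where "S = {u1, u2} \<times> {..<nR}"
  define E where "E = {f. \<exists>z\<in>{..<nR}. f (u1, z) \<and> f (u2, z)}"
  have "S \<subseteq> {..<nL} \<times> {..<nR}" using u by (auto simp: S_def)
  then have restrict: "map_pmf (\<lambda>f x. if x \<in> S then f x else False) (bip_graph_pmf nL nR wL wR)
      = Pi_pmf S False P"
    unfolding bip_graph_pmf_def P_def by (intro Pi_pmf_subset[symmetric]) simp_all
  have "{Eb. proj_edge nL nR Eb u1 u2} = E" using u by (auto simp: proj_edge_def E_def)
  moreover have "(\<lambda>f x. if x \<in> S then f x else False) -` E = E" by (auto simp: S_def E_def)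
  ultimately have "proj_edge_prob nL nR wL wR u1 u2 = measure_pmf.prob (Pi_pmf S False P) E"
    unfolding proj_edge_prob_def restrict[symmetric] by simp
  also have "\<dots> = 1 - measure_pmf.prob (Pi_pmf S False P) (UNIV - E)"
    using measure_pmf.prob_compl[of E "Pi_pmf S False P"] by simp
  also have "UNIV - E = {f. \<forall>z\<in>{..<nR}. \<not> (f (u1, z) \<and> f (u2, z))}"
    by (auto simp: E_def)
  also have "measure_pmf.prob (Pi_pmf S False P) \<dots>
      = (\<Prod>z<nR. 1 - pmf (P (u1, z)) True * pmf (P (u2, z)) True)"
    unfolding S_def using u by (subst measure_Pi_pmf_no_common_True) auto
  finally show ?thesis by (simp add: P_def)
qed

lemma moment_pos:
  assumes "n > 0" "\<And>z. z < n \<Longrightarrow> W z > 0"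
  shows "moment n W k > 0"
  using assms by (auto simp: moment_def intro!: divide_pos_pos sum_pos)

definition pair_intensity :: "nat \<Rightarrow> (nat \<Rightarrow> real) \<Rightarrow> real \<Rightarrow> real \<Rightarrow> real" where
  "pair_intensity n W w1 w2 = moment n W 2 / (moment n W 1)^2 * (w1 * w2 / real n)"

definition third_order_term :: "nat \<Rightarrow> (nat \<Rightarrow> real) \<Rightarrow> real \<Rightarrow> real \<Rightarrow> real" where
  "third_order_term n W w1 w2 =
     (let p = pair_intensity n W w1 w2
      in (p / 6 + moment n W 4 / (2 * real n * (moment n W 2)^2)) * p^2)"

lemma proj_edge_prob_estimate:
  fixes n nL :: nat and W wL :: "nat \<Rightarrow> real"
  assumes n: "n > 0" and W_pos: "\<And>z. z < n \<Longrightarrow> W z > 0"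
    and u: "u1 < nL" "u2 < nL" "u1 \<noteq> u2" and w_pos: "wL u1 > 0" "wL u2 > 0"
    and A1: "\<And>z. z < n \<Longrightarrow> wL u1 * W z / (real n * moment n W 1) \<le> 1"
      "\<And>z. z < n \<Longrightarrow> wL u2 * W z / (real n * moment n W 1) \<le> 1"
  defines "p \<equiv> pair_intensity n W (wL u1) (wL u2)"
    and "D \<equiv> third_order_term n W (wL u1) (wL u2)"
  assumes p_small: "p \<le> 1/2"
  shows "0 < p" "0 < D" "\<bar>proj_edge_prob nL n wL W u1 u2 - (p - p^2/2 + D)\<bar> \<le> 6 * p * D"
proof -
  define M1 where "M1 = moment n W 1"
  define M2 where "M2 = moment n W 2"
  define M4 where "M4 = moment n W 4"
  have M_pos: "M1 > 0" "M2 > 0" "M4 > 0"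
    using moment_pos[OF n W_pos] by (auto simp: M1_def M2_def M4_def)
  have moment_sum: "(\<Sum>z<n. W z ^ k) = n * moment n W k" for k using n by (simp add: moment_def)
  define a where "a = wL u1 * wL u2 / (real n * M1)^2"
  define q where "q = (\<lambda>z. a * W z ^ 2)"
  have edge: "pmf (bernoulli_pmf (edge_prob n W (wL u) (W z))) True = wL u * W z / (real n * M1)"
    if "u \<in> {u1, u2}" "z < n" for u z
  proof -
    have "0 \<le> wL u * W z / (real n * M1)" using that w_pos W_pos[of z] M_pos by auto
    with that A1 show ?thesis by (auto simp: edge_prob_def M1_def)
  qed
  have P_eq: "proj_edge_prob nL n wL W u1 u2 = 1 - (\<Prod>z<n. 1 - q z)"
    unfolding proj_edge_prob_eq_prod[OF u]
    by (intro arg_cong[where f = "\<lambda>x. 1 - x"] prod.cong) (auto simp: edge q_def a_def power2_eq_square)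
  have p_eq: "p = a * (n * M2)"
    using n M_pos by (simp add: p_def pair_intensity_def a_def M1_def M2_def field_simps power2_eq_square)
  have sum_q: "(\<Sum>z<n. q z) = p"
    unfolding p_eq by (simp add: q_def M2_def moment_sum flip: sum_distrib_left)
  have "(\<Sum>z<n. (q z)^2) = a^2 * (n * M4)"
    by (simp add: q_def M4_def moment_sum power_mult_distrib flip: sum_distrib_left power_mult)
  then have D_eq: "D = p^3/6 + (\<Sum>z<n. (q z)^2)/2"
    using n M_pos p_eq
    by (simp add: D_def third_order_term_def Let_def flip: p_def M2_def M4_def)
      (simp add: field_simps power2_eq_square power3_eq_cube)
  have q_nonneg: "0 \<le> q z" for z using w_pos by (simp add: q_def a_def)
  show p_pos: "0 < p" using n M_pos w_pos unfolding p_def pair_intensity_def M1_def M2_def by simp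
  have "0 \<le> (\<Sum>z<n. (q z)^2)" "0 < p^3" using p_pos by (auto intro: sum_nonneg)
  then show "0 < D" unfolding D_eq by linarith
  show "\<bar>proj_edge_prob nL n wL W u1 u2 - (p - p^2/2 + D)\<bar> \<le> 6 * p * D"
    using one_minus_prod_one_minus_estimate[of "{..<n}" q] q_nonneg p_small
    by (simp add: P_eq sum_q D_eq algebra_simps)
qed

lemma bigo_tendsto_zero:
  fixes f g :: "'a \<Rightarrow> real"
  assumes "f \<in> O[F](g)" "(g \<longlongrightarrow> 0) F"
  shows "(f \<longlongrightarrow> 0) F"
proof -
  have "g \<in> o[F](\<lambda>_. 1)" using assms(2) by (intro smalloI_tendsto) auto
  with assms(1) have "f \<in> o[F](\<lambda>_. 1)" by (rule landau_o.big_small_trans)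
  from smalloD_tendsto[OF this] show ?thesis by simp
qed

lemma pair_intensity_bigo:
  fixes n :: "nat \<Rightarrow> nat" and W :: "nat \<Rightarrow> nat \<Rightarrow> real" and w1 w2 :: "nat \<Rightarrow> real"
  assumes w1: "w1 \<in> O(\<lambda>k. real (n k) powr (1/2 - \<delta>))"
    and w2: "w2 \<in> O(\<lambda>k. real (n k) powr (1/2 - \<delta>))"
    and M2: "(\<lambda>k. moment (n k) (W k) 2) \<in> O(\<lambda>k. (moment (n k) (W k) 1)^2)"
    and n_pos: "eventually (\<lambda>k. n k > 0) sequentially"
    and W_pos: "\<And>k z. z < n k \<Longrightarrow> W k z > 0"
  shows "(\<lambda>k. pair_intensity (n k) (W k) (w1 k) (w2 k)) \<in> O(\<lambda>k. real (n k) powr (- 2 * \<delta>))"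
proof -
  have ev: "eventually (\<lambda>k. n k > 0 \<and> moment (n k) (W k) 1 \<noteq> 0) sequentially"
    using n_pos by eventually_elim (use moment_pos[OF _ W_pos] in \<open>simp add: less_imp_neq[symmetric]\<close>)
  have "(\<lambda>k. moment (n k) (W k) 2 / (moment (n k) (W k) 1)^2) \<in> O(\<lambda>_. 1)"
    using M2 ev by (subst landau_o.big.divide_eq2) (auto elim: eventually_mono)
  moreover have "(\<lambda>k. w1 k * w2 k / real (n k))
      \<in> O(\<lambda>k. real (n k) powr (1/2 - \<delta>) * real (n k) powr (1/2 - \<delta>) / real (n k))"
    using w1 w2 ev by (intro landau_o.big.divide_right landau_o.big.mult) (auto elim: eventually_mono)
  ultimately have "(\<lambda>k. pair_intensity (n k) (W k) (w1 k) (w2 k))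
      \<in> O(\<lambda>k. 1 * (real (n k) powr (1/2 - \<delta>) * real (n k) powr (1/2 - \<delta>) / real (n k)))"
    unfolding pair_intensity_def by (rule landau_o.big.mult)
  also have "O(\<lambda>k. 1 * (real (n k) powr (1/2 - \<delta>) * real (n k) powr (1/2 - \<delta>) / real (n k)))
      = O(\<lambda>k. real (n k) powr (- 2 * \<delta>))"
    using ev by (intro landau_o.big.cong)
      (auto elim!: eventually_mono simp: powr_diff powr_minus_divide simp flip: powr_add)
  finally show ?thesis .
qed

lemma relative_error_bigo:
  fixes P Q D p :: "'a \<Rightarrow> real"
  assumes "eventually (\<lambda>x. 0 < D x \<and> \<bar>P x - (Q x + D x)\<bar> \<le> c * \<bar>p x\<bar> * D x) F"
  shows "\<exists>e. e \<in> O[F](p) \<and> eventually (\<lambda>x. P x = Q x + D x * (1 + e x)) F"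
proof (intro exI conjI)
  define e where "e = (\<lambda>x. (P x - (Q x + D x)) / D x)"
  show "e \<in> O[F](p)"
    using assms by (intro bigoI[of _ c]) (auto elim!: eventually_mono simp: e_def abs_divide divide_le_eq)
  show "eventually (\<lambda>x. P x = Q x + D x * (1 + e x)) F"
    using assms by eventually_elim (simp add: e_def field_simps)
qed

theorem mainTheorem4:
  fixes nL nR :: "nat \<Rightarrow> nat"
    and wL wR :: "nat \<Rightarrow> nat \<Rightarrow> real"
    and u1 u2 :: "nat \<Rightarrow> nat"
    and \<delta> :: real
  assumes delta_pos: "\<delta> > 0"
    and nL_inf: "filterlim nL at_top sequentially"
    and nR_inf: "filterlim nR at_top sequentially"
    and wL_pos: "\<And>k u. u < nL k \<Longrightarrow> wL k u > 0"
    and wR_pos: "\<And>k v. v < nR k \<Longrightarrow> wR k v > 0"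
    and A1: "\<And>k u v. u < nL k \<Longrightarrow> v < nR k \<Longrightarrow>
               wL k u * wR k v / (real (nR k) * moment (nR k) (wR k) 1) \<le> 1"
    and A2_max: "(\<lambda>k. Max (wL k ` {..<nL k} \<union> wR k ` {..<nR k}))
                   \<in> O(\<lambda>k. real (nR k) powr (1/2 - \<delta>))"
    and A2_min: "(\<lambda>k. Min (wL k ` {..<nL k})) \<in> \<Omega>(\<lambda>k. 1)"
    and A2_M2: "(\<lambda>k. moment (nR k) (wR k) 2) \<in> O(\<lambda>k. (moment (nR k) (wR k) 1)\<^sup>2)"
    and A2_M4: "(\<lambda>k. moment (nR k) (wR k) 4) \<in> O(\<lambda>k. real (nR k) powr (1 - 2 * \<delta>))"
    and u_in: "\<And>k. u1 k < nL k" "\<And>k. u2 k < nL k"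
    and u_dist: "\<And>k. u1 k \<noteq> u2 k"
  shows "let M1 = (\<lambda>k. moment (nR k) (wR k) 1);
             M2 = (\<lambda>k. moment (nR k) (wR k) 2);
             M4 = (\<lambda>k. moment (nR k) (wR k) 4);
             p = (\<lambda>k. M2 k / (M1 k)\<^sup>2 * (wL k (u1 k) * wL k (u2 k) / real (nR k)))
         in (\<exists>e. e \<in> O(\<lambda>k. real (nR k) powr (- 2 * \<delta>)) \<and>
                 (\<forall>\<^sub>F k in sequentially. proj_edge_prob (nL k) (nR k) (wL k) (wR k) (u1 k) (u2 k)
                      = p k - (p k)\<^sup>2 / 2
                        + (p k / 6 + M4 k / (2 * real (nR k) * (M2 k)\<^sup>2)) * (p k)\<^sup>2 * (1 + e k)))
            \<and> p \<in> O(\<lambda>k. real (nR k) powr (- 2 * \<delta>))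
            \<and> p \<longlonglongrightarrow> 0"
proof -
  define p where "p = (\<lambda>k. pair_intensity (nR k) (wR k) (wL k (u1 k)) (wL k (u2 k)))"
  define D where "D = (\<lambda>k. third_order_term (nR k) (wR k) (wL k (u1 k)) (wL k (u2 k)))"
  define P where "P = (\<lambda>k. proj_edge_prob (nL k) (nR k) (wL k) (wR k) (u1 k) (u2 k))"
  define r where "r = (\<lambda>k. real (nR k) powr (- 2 * \<delta>))"
  have nR_pos: "eventually (\<lambda>k. nR k > 0) sequentially"
    using nR_inf by (auto simp: filterlim_at_top elim!: allE[of _ 1] eventually_mono)
  have weight_bigo: "(\<lambda>k. wL k (u k)) \<in> O(\<lambda>k. real (nR k) powr (1/2 - \<delta>))"
    if u: "\<And>k. u k < nL k" for u
  proof (rule landau_o.big_trans[OF landau_o.big_mono A2_max], intro always_eventually allI)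
    fix k
    have "wL k (u k) \<le> Max (wL k ` {..<nL k} \<union> wR k ` {..<nR k})" using u by (intro Max_ge) auto
    with wL_pos[OF u] show "norm (wL k (u k)) \<le> norm (Max (wL k ` {..<nL k} \<union> wR k ` {..<nR k}))"
      by (simp add: less_imp_le)
  qed
  have p_bigo: "p \<in> O(r)"
    unfolding p_def r_def using nR_pos wR_pos by (intro pair_intensity_bigo weight_bigo u_in A2_M2)
  have "r \<longlonglongrightarrow> 0"
    unfolding r_def using delta_pos filterlim_compose[OF filterlim_real_sequentially nR_inf]
    by (intro tendsto_neg_powr) auto
  with p_bigo have p_lim: "p \<longlonglongrightarrow> 0" by (rule bigo_tendsto_zero)
  then have "eventually (\<lambda>k. p k < 1/2) sequentially" by (rule order_tendstoD) simp
  with nR_pos have "eventually (\<lambda>k. 0 < D k \<and>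
      \<bar>P k - ((p k - (p k)\<^sup>2 / 2) + D k)\<bar> \<le> 6 * \<bar>p k\<bar> * D k) sequentially"
  proof eventually_elim
    case (elim k)
    from proj_edge_prob_estimate[OF elim(1) wR_pos u_in(1,2) u_dist wL_pos[OF u_in(1)]
        wL_pos[OF u_in(2)] A1[OF u_in(1)] A1[OF u_in(2)]] elim(2)
    show ?case by (simp add: P_def p_def D_def)
  qed
  from relative_error_bigo[OF this] obtain e where "e \<in> O(p)"
    and expansion: "eventually (\<lambda>k. P k = (p k - (p k)\<^sup>2 / 2) + D k * (1 + e k)) sequentially"
    by blast
  from this(1) p_bigo have "e \<in> O(r)" by (rule landau_o.big_trans)
  with expansion p_bigo p_lim show ?thesis
    unfolding Let_def P_def p_def D_def r_def pair_intensity_def third_order_term_def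
    by (intro conjI exI[of _ e]) (simp_all add: mult.assoc)
qed

end
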